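(* Let $X$ be a smooth projective variety defined over $\overline{\mathbb{Q}}$ and $f\colon X\to X$ a surjective endomorphism over $\overline{\mathbb{Q}}$. Let $\lambda\in\mathbb{C}$ with $|\lambda|\neq 0,1$. Let $D_0,\dots,D_l\in \mathrm{Div}(X)\otimes_{\mathbb Z}\mathbb{C}$ be $\mathbb{C}$-divisors satisfying the linear equivalences $f^\ast D_j\sim D_{j-1}+\lambda D_j$ for $0\le j\le l$, where $D_{-1}:=0$, and for each $j$ fix a Weil height function $h_{D_j}\colon X(\overline{\mathbb Q})\to\mathbb{C}$. Then there exist unique functions $\widehat{h}_{D_j}\colon \varprojlim_f X(\overline{\mathbb{Q}})\to\mathbb{C}$ ($0\le j\le l$) such that $\widehat{h}_{D_j}-h_{D_j}\circ \mathrm{pr}_0$ is a bounded function on $\varprojlim_f X(\overline{\mathbb{Q}})$ for each $j$, and \[\widehat{h}_{D_j}\circ f=\widehat{h}_{D_{j-1}}+\lambda\,\widehat{h}_{D_j}\quad(0\le j\le l),\] where $\widehat{h}_{D_{-1}}:=0$.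
   Context: $\varprojlim_f X(\overline{\mathbb{Q}})$ denotes the set of sequences $(P_n)_{n\in\mathbb Z}\in X(\overline{\mathbb Q})^{\mathbb Z}$ with $f(P_n)=P_{n+1}$ for all $n\in\mathbb{Z}$; $\mathrm{pr}_m((P_n)_n)=P_m$; and $f$ acts on this set as the left shift, i.e. $f((P_n)_n)$ is the sequence whose $m$-th term is $P_{m+1}$. For a $\mathbb{C}$-divisor $D=\sum_i a_iE_i$ ($a_i\in\mathbb C$, $E_i$ divisors), a Weil height function is $h_D=\sum_i a_i h_{E_i}$ with $h_{E_i}$ Weil height functions (in the usual sense of the Weil height machine) associated with $E_i$. *)

theory Defs
  imports Complex_Main
begin

text \<open>Points of X(Qbar): a type 'x.  Prime divisors: a type 'e.
  Integer divisors: finitely supported 'e => int; C-divisors: finitely supported 'e => complex.\<close>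

definition fin_supp :: "('e \<Rightarrow> 'a::zero) \<Rightarrow> bool" where
  "fin_supp D \<longleftrightarrow> finite {e. D e \<noteq> 0}"

definition bounded_on :: "'a set \<Rightarrow> ('a \<Rightarrow> complex) \<Rightarrow> bool" where
  "bounded_on A g \<longleftrightarrow> (\<exists>B. \<forall>x\<in>A. cmod (g x) \<le> B)"

definition div_height :: "('e \<Rightarrow> 'x \<Rightarrow> real) \<Rightarrow> ('e \<Rightarrow> complex) \<Rightarrow> 'x \<Rightarrow> complex" where
  "div_height hE D x = (\<Sum>e\<in>{e. D e \<noteq> 0}. D e * complex_of_real (hE e x))"

text \<open>Pullback of a C-divisor, given pullbacks f^*E of prime divisors.\<close>
definition pullbackC :: "('e \<Rightarrow> 'e \<Rightarrow> int) \<Rightarrow> ('e \<Rightarrow> complex) \<Rightarrow> ('e \<Rightarrow> complex)" where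
  "pullbackC fstar D = (\<lambda>e'. \<Sum>e\<in>{e. D e \<noteq> 0}. D e * of_int (fstar e e'))"

text \<open>Linear equivalence of C-divisors: the difference lies in (principal divisors) (x) C.\<close>
definition lin_equiv_C :: "('e \<Rightarrow> int) set \<Rightarrow> ('e \<Rightarrow> complex) \<Rightarrow> ('e \<Rightarrow> complex) \<Rightarrow> bool" where
  "lin_equiv_C Prin D D' \<longleftrightarrow>
     (\<exists>K c P. finite (K::nat set) \<and> (\<forall>k\<in>K. P k \<in> Prin) \<and>
        (\<forall>e. D e - D' e = (\<Sum>k\<in>K. c k * of_int (P k e))))"

text \<open>Properties of the Weil height machine (for f, the pullback data fstar, the set of principal
  divisors Prin, and chosen Weil heights hE of the prime divisors).\<close>
definition weil_height_machine ::
  "('x \<Rightarrow> 'x) \<Rightarrow> ('e \<Rightarrow> 'e \<Rightarrow> int) \<Rightarrow> ('e \<Rightarrow> int) set \<Rightarrow> ('e \<Rightarrow> 'x \<Rightarrow> real) \<Rightarrow> bool" where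
  "weil_height_machine f fstar Prin hE \<longleftrightarrow>
     (\<forall>e. fin_supp (fstar e)) \<and>
     (\<forall>P\<in>Prin. fin_supp P \<and> bounded_on UNIV (div_height hE (of_int \<circ> P))) \<and>
     (\<forall>e. bounded_on UNIV (\<lambda>x. div_height hE (of_int \<circ> fstar e) x - complex_of_real (hE e (f x))))"

definition inv_lim :: "('x \<Rightarrow> 'x) \<Rightarrow> (int \<Rightarrow> 'x) set" where
  "inv_lim f = {P. \<forall>n. f (P n) = P (n + 1)}"

definition pr :: "int \<Rightarrow> (int \<Rightarrow> 'x) \<Rightarrow> 'x" where
  "pr m P = P m"

definition shift :: "(int \<Rightarrow> 'x) \<Rightarrow> (int \<Rightarrow> 'x)" where
  "shift P = (\<lambda>m. P (m + 1))"

end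

theory Submission
  imports Defs
begin

(* Write r_j := h_{D_j} o f - h_{D_{j-1}} - lam h_{D_j}; the Weil height machine makes r_j bounded on
   X(Qbar).  On the inverse limit the shift is invertible, so every bounded r admits a unique bounded
   solution u of u o shift = lam u + r: for |lam| > 1 sum r along forward orbits with weights
   lam^-(n+1), for |lam| < 1 along backward orbits with weights lam^n; a bounded u with
   u o shift = lam u vanishes by iterating forwards resp. backwards.  Solving the Jordan-type system
   j = 0, ..., l one equation at a time yields the corrections hh_j - h_j o pr_0. *)

lemma bounded_on_diff:
  "bounded_on A g \<Longrightarrow> bounded_on A k \<Longrightarrow> bounded_on A (\<lambda>x. g x - k x)"
  unfolding bounded_on_def by (meson add_mono norm_triangle_ineq4 order_trans)

lemma bounded_on_add:
  "bounded_on A g \<Longrightarrow> bounded_on A k \<Longrightarrow> bounded_on A (\<lambda>x. g x + k x)"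
  unfolding bounded_on_def by (meson add_mono norm_triangle_ineq order_trans)

lemma bounded_on_cmult: "bounded_on A g \<Longrightarrow> bounded_on A (\<lambda>x. c * g x)"
  unfolding bounded_on_def by (metis mult_left_mono norm_ge_zero norm_mult)

lemma bounded_on_sum:
  "finite K \<Longrightarrow> (\<And>k. k \<in> K \<Longrightarrow> bounded_on A (g k)) \<Longrightarrow> bounded_on A (\<lambda>x. \<Sum>k\<in>K. g k x)"
proof (induction K rule: finite_induct)
  case empty
  then show ?case by (auto simp: bounded_on_def)
next
  case (insert a F)
  then have "bounded_on A (\<lambda>x. g a x - - (\<Sum>k\<in>F. g k x))"
    by (intro bounded_on_diff) (auto simp: bounded_on_def)
  with insert show ?case by simp
qed

lemma bounded_on_comp: "bounded_on UNIV g \<Longrightarrow> bounded_on A (\<lambda>x. g (\<phi> x))"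
  unfolding bounded_on_def by blast

lemma bounded_on_cong: "bounded_on A g \<Longrightarrow> (\<And>x. x \<in> A \<Longrightarrow> g x = k x) \<Longrightarrow> bounded_on A k"
  unfolding bounded_on_def by auto

lemma div_height_eq_sum_superset:
  "finite A \<Longrightarrow> {e. X e \<noteq> 0} \<subseteq> A \<Longrightarrow>
    div_height hE X x = (\<Sum>e\<in>A. X e * complex_of_real (hE e x))"
  unfolding div_height_def by (rule sum.mono_neutral_left) auto

lemma div_height_add:
  assumes "fin_supp X" "fin_supp Y"
  shows "div_height hE (\<lambda>e. X e + Y e) x = div_height hE X x + div_height hE Y x"
proof -
  let ?A = "{e. X e \<noteq> 0} \<union> {e. Y e \<noteq> 0}"
  have "finite ?A" using assms by (simp add: fin_supp_def)
  then show ?thesis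
    by (subst (1 2 3) div_height_eq_sum_superset[of ?A])
       (auto simp: distrib_right sum.distrib)
qed

lemma div_height_cmult: "div_height hE (\<lambda>e. c * X e) x = c * div_height hE X x"
  by (cases "c = 0") (simp_all add: div_height_def sum_distrib_left mult.assoc)

lemma supp_pullbackC_subset:
  "{e'. pullbackC fstar D e' \<noteq> 0} \<subseteq> (\<Union>e\<in>{e. D e \<noteq> 0}. {e'. fstar e e' \<noteq> 0})"
proof
  fix e' assume "e' \<in> {e'. pullbackC fstar D e' \<noteq> 0}"
  then obtain e where "D e \<noteq> 0" "D e * of_int (fstar e e') \<noteq> 0"
    unfolding pullbackC_def by (auto elim: sum.not_neutral_contains_not_neutral)
  then show "e' \<in> (\<Union>e\<in>{e. D e \<noteq> 0}. {e'. fstar e e' \<noteq> 0})" by auto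
qed

lemma fin_supp_pullbackC:
  assumes "\<forall>e. fin_supp (fstar e)" and "fin_supp D"
  shows "fin_supp (pullbackC fstar D)"
  unfolding fin_supp_def
  by (rule finite_subset[OF supp_pullbackC_subset]) (use assms in \<open>simp add: fin_supp_def\<close>)

lemma bounded_div_height_comp_diff_pullbackC:
  assumes W: "weil_height_machine f fstar Prin hE" and D: "fin_supp D"
  shows "bounded_on UNIV (\<lambda>x. div_height hE D (f x) - div_height hE (pullbackC fstar D) x)"
proof -
  define E where "E = {e. D e \<noteq> 0}"
  define U where "U = (\<Union>e\<in>E. {e'. fstar e e' \<noteq> 0})"
  have fE: "finite E" using D by (simp add: E_def fin_supp_def)
  have fU: "finite U" using W fE by (simp add: U_def weil_height_machine_def fin_supp_def)
  have supp_pb: "{e'. pullbackC fstar D e' \<noteq> 0} \<subseteq> U"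
    unfolding U_def E_def by (rule supp_pullbackC_subset)
  have fstar_height: "div_height hE (of_int \<circ> fstar e) x =
      (\<Sum>e'\<in>U. of_int (fstar e e') * complex_of_real (hE e' x))" if "e \<in> E" for e x
    using that by (subst div_height_eq_sum_superset[OF fU]) (auto simp: U_def)
  have "div_height hE D (f x) - div_height hE (pullbackC fstar D) x =
      (\<Sum>e\<in>E. D e * (complex_of_real (hE e (f x)) - div_height hE (of_int \<circ> fstar e) x))" for x
  proof -
    have "div_height hE (pullbackC fstar D) x =
        (\<Sum>e'\<in>U. \<Sum>e\<in>E. D e * (of_int (fstar e e') * complex_of_real (hE e' x)))"
      by (subst div_height_eq_sum_superset[OF fU supp_pb])
         (simp add: pullbackC_def E_def sum_distrib_right mult.assoc)
    also have "\<dots> = (\<Sum>e\<in>E. D e * div_height hE (of_int \<circ> fstar e) x)"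
      by (subst sum.swap) (simp add: fstar_height sum_distrib_left)
    finally show ?thesis
      by (simp add: div_height_def E_def right_diff_distrib sum_subtractf)
  qed
  moreover have "bounded_on UNIV
      (\<lambda>x. \<Sum>e\<in>E. D e * (complex_of_real (hE e (f x)) - div_height hE (of_int \<circ> fstar e) x))"
    using W unfolding weil_height_machine_def
    by (intro bounded_on_sum[OF fE] bounded_on_cmult) (auto simp: bounded_on_def norm_minus_commute)
  ultimately show ?thesis by simp
qed

lemma bounded_div_height_diff_lin_equiv:
  assumes Prin: "\<forall>P\<in>Prin. fin_supp P \<and> bounded_on UNIV (div_height hE (of_int \<circ> P))"
    and D1: "fin_supp D1" and D2: "fin_supp D2" and "lin_equiv_C Prin D1 D2"
  shows "bounded_on UNIV (\<lambda>x. div_height hE D1 x - div_height hE D2 x)"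
proof -
  obtain K c P where K: "finite (K::nat set)" "\<forall>k\<in>K. P k \<in> Prin"
    and diff: "\<forall>e. D1 e - D2 e = (\<Sum>k\<in>K. c k * of_int (P k e))"
    using \<open>lin_equiv_C Prin D1 D2\<close> unfolding lin_equiv_C_def by blast
  define A where "A = {e. D1 e \<noteq> 0} \<union> {e. D2 e \<noteq> 0} \<union> (\<Union>k\<in>K. {e. P k e \<noteq> 0})"
  have fA: "finite A" using D1 D2 K Prin by (auto simp: A_def fin_supp_def)
  note height_A = div_height_eq_sum_superset[OF fA]
  have "div_height hE D1 x - div_height hE D2 x =
      (\<Sum>e\<in>A. (D1 e - D2 e) * complex_of_real (hE e x))" for x
    by (subst (1 2) height_A) (auto simp: A_def left_diff_distrib sum_subtractf)
  also have "\<dots> x = (\<Sum>e\<in>A. \<Sum>k\<in>K. c k * (of_int (P k e) * complex_of_real (hE e x)))" for x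
    by (simp add: diff sum_distrib_right mult.assoc)
  also have "\<dots> x = (\<Sum>k\<in>K. c k * div_height hE (of_int \<circ> P k) x)" for x
  proof (subst sum.swap, intro sum.cong refl)
    fix k assume "k \<in> K"
    then have "div_height hE (of_int \<circ> P k) x = (\<Sum>e\<in>A. of_int (P k e) * complex_of_real (hE e x))"
      by (subst height_A) (auto simp: A_def)
    then show "(\<Sum>e\<in>A. c k * (of_int (P k e) * complex_of_real (hE e x))) =
        c k * div_height hE (of_int \<circ> P k) x"
      by (simp add: sum_distrib_left)
  qed
  finally show ?thesis
    using K Prin by (simp only:) (intro bounded_on_sum bounded_on_cmult; auto)
qed

lemma bounded_height_defect:
  fixes D D' :: "'e \<Rightarrow> complex" and h h' :: "'x \<Rightarrow> complex"
  assumes W: "weil_height_machine f fstar Prin hE"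
    and D: "fin_supp D" and D': "fin_supp D'"
    and equiv: "lin_equiv_C Prin (pullbackC fstar D) (\<lambda>e. D' e + lam * D e)"
    and h: "bounded_on UNIV (\<lambda>x. h x - div_height hE D x)"
    and h': "bounded_on UNIV (\<lambda>x. h' x - div_height hE D' x)"
  shows "bounded_on UNIV (\<lambda>x. h (f x) - h' x - lam * h x)"
proof -
  let ?dh = "div_height hE"
  have fs_pb: "fin_supp (pullbackC fstar D)"
    using W D by (intro fin_supp_pullbackC) (simp_all add: weil_height_machine_def)
  have fs_lamD: "fin_supp (\<lambda>e. lam * D e)"
    using D unfolding fin_supp_def by (rule finite_subset[rotated]) auto
  have fs_sum: "fin_supp (\<lambda>e. D' e + lam * D e)"
    using D' fs_lamD unfolding fin_supp_def by (rule finite_subset[rotated, OF finite_UnI]) auto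
  have "bounded_on UNIV (\<lambda>x. ?dh (pullbackC fstar D) x - ?dh (\<lambda>e. D' e + lam * D e) x)"
    using W fs_pb fs_sum equiv
    by (intro bounded_div_height_diff_lin_equiv) (auto simp: weil_height_machine_def)
  then have equiv_bounded:
      "bounded_on UNIV (\<lambda>x. ?dh (pullbackC fstar D) x - ?dh D' x - lam * ?dh D x)"
    using D' fs_lamD by (simp add: div_height_add div_height_cmult diff_diff_eq)
  have "bounded_on UNIV (\<lambda>x. (h (f x) - ?dh D (f x)) + (?dh D (f x) - ?dh (pullbackC fstar D) x)
      + (?dh (pullbackC fstar D) x - ?dh D' x - lam * ?dh D x)
      - (h' x - ?dh D' x) - lam * (h x - ?dh D x))"
    by (intro bounded_on_diff bounded_on_add bounded_on_cmult bounded_on_comp[OF h]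
        bounded_div_height_comp_diff_pullbackC[OF W D] equiv_bounded h h')
  then show ?thesis by (rule bounded_on_cong) (simp add: algebra_simps)
qed

lemma funpow_in_closed:
  "(\<And>P. P \<in> S \<Longrightarrow> \<sigma> P \<in> S) \<Longrightarrow> P \<in> S \<Longrightarrow> (\<sigma> ^^ n) P \<in> S"
  by (induction n) auto

lemma bounded_solution_expanding:
  fixes lam :: complex and r :: "'a \<Rightarrow> complex"
  assumes lam: "1 < cmod lam" and \<sigma>: "\<And>P. P \<in> S \<Longrightarrow> \<sigma> P \<in> S"
    and r: "\<And>P. P \<in> S \<Longrightarrow> cmod (r P) \<le> B"
  shows "\<exists>u. bounded_on S u \<and> (\<forall>P\<in>S. u (\<sigma> P) = lam * u P + r P)"
proof -
  define q where "q = 1 / cmod lam"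
  have q: "0 < q" "q < 1" using lam by (auto simp: q_def divide_simps)
  have lam0: "lam \<noteq> 0" using lam by auto
  define a where "a P n = r ((\<sigma> ^^ n) P) / lam ^ Suc n" for P n
  have a_le: "norm (a P n) \<le> B * q ^ Suc n" if "P \<in> S" for P n
  proof -
    have "cmod (r ((\<sigma> ^^ n) P)) / cmod lam ^ Suc n \<le> B / cmod lam ^ Suc n"
      using r[OF funpow_in_closed[of S \<sigma>, OF \<sigma> that]] by (intro divide_right_mono) auto
    then show ?thesis by (simp add: a_def norm_divide norm_mult norm_power q_def power_one_over)
  qed
  have geom: "summable (\<lambda>n. B * q ^ Suc n)"
    using q by (intro summable_mult summable_geometric) (simp add: summable_Suc_iff)
  have a_summable: "summable (a P)" if "P \<in> S" for P
    using summable_comparison_test'[OF geom a_le[OF that]] .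
  define u where "u P = - suminf (a P)" for P
  have "bounded_on S u"
    unfolding bounded_on_def
  proof (intro exI ballI)
    fix P assume "P \<in> S"
    show "cmod (u P) \<le> (\<Sum>n. B * q ^ Suc n)"
      using norm_suminf_le[OF a_le[OF \<open>P \<in> S\<close>] geom] by (simp add: u_def)
  qed
  moreover have "u (\<sigma> P) = lam * u P + r P" if "P \<in> S" for P
  proof -
    have shift_a: "a (\<sigma> P) n = lam * a P (Suc n)" for n
      using lam0 by (simp add: a_def funpow_Suc_right del: funpow.simps)
    have "suminf (a (\<sigma> P)) = lam * (\<Sum>n. a P (Suc n))"
      unfolding shift_a by (rule suminf_mult) (use a_summable[OF that] summable_Suc_iff in auto)
    also have "\<dots> = lam * (suminf (a P) - r P / lam)"
      using suminf_split_head[OF a_summable[OF that]] by (simp add: a_def)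
    finally show ?thesis using lam0 by (simp add: u_def algebra_simps)
  qed
  ultimately show ?thesis by blast
qed

lemma bounded_solution_contracting:
  fixes lam :: complex and r :: "'a \<Rightarrow> complex"
  assumes lam: "cmod lam < 1" and \<tau>: "\<And>P. P \<in> S \<Longrightarrow> \<tau> P \<in> S"
    and \<tau>_\<sigma>: "\<And>P. P \<in> S \<Longrightarrow> \<tau> (\<sigma> P) = P"
    and r: "\<And>P. P \<in> S \<Longrightarrow> cmod (r P) \<le> B"
  shows "\<exists>u. bounded_on S u \<and> (\<forall>P\<in>S. u (\<sigma> P) = lam * u P + r P)"
proof -
  have term_le: "norm (lam ^ n * r ((\<tau> ^^ m) P)) \<le> B * cmod lam ^ n" if "P \<in> S" for P n m
    using mult_left_mono[OF r[OF funpow_in_closed[of S \<tau>, OF \<tau> that]], of "cmod lam ^ n"]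
    by (simp add: norm_mult norm_power mult.commute)
  have geom: "summable (\<lambda>n. B * cmod lam ^ n)"
    using lam by (intro summable_mult summable_geometric) auto
  have term_summable: "summable (\<lambda>n. lam ^ n * r ((\<tau> ^^ g n) P))" if "P \<in> S" for P g
    using summable_comparison_test'[OF geom term_le[OF that]] .
  define u where "u P = (\<Sum>n. lam ^ n * r ((\<tau> ^^ Suc n) P))" for P
  have "bounded_on S u"
    unfolding bounded_on_def
  proof (intro exI ballI)
    fix P assume "P \<in> S"
    show "cmod (u P) \<le> (\<Sum>n. B * cmod lam ^ n)"
      unfolding u_def by (rule norm_suminf_le[OF term_le[OF \<open>P \<in> S\<close>] geom])
  qed
  moreover have "u (\<sigma> P) = lam * u P + r P" if "P \<in> S" for P
  proof -
    have "(\<tau> ^^ Suc n) (\<sigma> P) = (\<tau> ^^ n) P" for n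
      using \<tau>_\<sigma>[OF that] by (simp add: funpow_Suc_right del: funpow.simps)
    then have "u (\<sigma> P) = (\<Sum>n. lam ^ n * r ((\<tau> ^^ n) P))"
      by (simp add: u_def del: funpow.simps)
    also have "\<dots> = r P + (\<Sum>n. lam * (lam ^ n * r ((\<tau> ^^ Suc n) P)))"
      using suminf_split_head[OF term_summable[OF that, of id]] by (simp add: mult.assoc)
    also have "\<dots> = r P + lam * u P"
      unfolding u_def by (simp only: suminf_mult[OF term_summable[OF that, of Suc]])
    finally show ?thesis by simp
  qed
  ultimately show ?thesis by blast
qed

lemma bounded_solution_exists:
  fixes lam :: complex
  assumes lam: "cmod lam \<noteq> 1"
    and \<sigma>: "\<And>P. P \<in> S \<Longrightarrow> \<sigma> P \<in> S" and \<tau>: "\<And>P. P \<in> S \<Longrightarrow> \<tau> P \<in> S"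
    and \<tau>_\<sigma>: "\<And>P. P \<in> S \<Longrightarrow> \<tau> (\<sigma> P) = P"
    and r: "bounded_on S r"
  shows "\<exists>u. bounded_on S u \<and> (\<forall>P\<in>S. u (\<sigma> P) = lam * u P + r P)"
proof -
  obtain B where B: "\<And>P. P \<in> S \<Longrightarrow> cmod (r P) \<le> B"
    using r unfolding bounded_on_def by blast
  show ?thesis
  proof (cases "1 < cmod lam")
    case True
    then show ?thesis by (rule bounded_solution_expanding[of lam S \<sigma>, OF _ \<sigma> B])
  next
    case False
    with lam have "cmod lam < 1" by simp
    then show ?thesis by (rule bounded_solution_contracting[of lam S \<tau> \<sigma>, OF _ \<tau> \<tau>_\<sigma> B])
  qed
qed

lemma bounded_eigenfunction_eq_0:
  fixes lam :: complex and v :: "'a \<Rightarrow> complex"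
  assumes lam: "cmod lam \<noteq> 1"
    and \<sigma>: "\<And>P. P \<in> S \<Longrightarrow> \<sigma> P \<in> S" and \<tau>: "\<And>P. P \<in> S \<Longrightarrow> \<tau> P \<in> S"
    and \<sigma>_\<tau>: "\<And>P. P \<in> S \<Longrightarrow> \<sigma> (\<tau> P) = P"
    and v: "bounded_on S v" and eigen: "\<And>P. P \<in> S \<Longrightarrow> v (\<sigma> P) = lam * v P"
    and P: "P \<in> S"
  shows "v P = 0"
proof (rule ccontr)
  assume "v P \<noteq> 0"
  then have vP: "0 < cmod (v P)" by simp
  obtain B where B: "\<And>Q. Q \<in> S \<Longrightarrow> cmod (v Q) \<le> B"
    using v unfolding bounded_on_def by blast
  have B0: "0 < B" using B[OF P] vP by linarith
  show False
  proof (cases "1 < cmod lam")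
    case True
    have forward: "v ((\<sigma> ^^ n) P) = lam ^ n * v P" for n
      by (induction n) (simp_all add: eigen funpow_in_closed[of S \<sigma>, OF \<sigma> P])
    obtain n where n: "B / cmod (v P) < cmod lam ^ n"
      using real_arch_pow[OF True] by blast
    have "cmod lam ^ n * cmod (v P) \<le> B"
      using B[OF funpow_in_closed[of S \<sigma>, OF \<sigma> P, of n]] by (simp add: forward norm_mult norm_power)
    with n vP show False by (simp add: divide_simps)
  next
    case False
    with lam have lam_lt: "cmod lam < 1" by simp
    have backward: "v P = lam ^ n * v ((\<tau> ^^ n) P)" for n
    proof (induction n)
      case (Suc n)
      have "v ((\<tau> ^^ n) P) = v (\<sigma> ((\<tau> ^^ Suc n) P))"
        using \<sigma>_\<tau>[OF funpow_in_closed[of S \<tau>, OF \<tau> P]] by simp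
      also have "\<dots> = lam * v ((\<tau> ^^ Suc n) P)"
        by (rule eigen[OF funpow_in_closed[of S \<tau>, OF \<tau> P]])
      finally show ?case using Suc by (simp add: mult.assoc)
    qed simp
    obtain n where n: "cmod lam ^ n < cmod (v P) / B"
      using real_arch_pow_inv[OF divide_pos_pos[OF vP B0] lam_lt] by blast
    have "cmod (v P) \<le> cmod lam ^ n * B"
      using mult_left_mono[OF B[OF funpow_in_closed[of S \<tau>, OF \<tau> P, of n]], of "cmod lam ^ n"]
      by (subst backward[of n]) (simp add: norm_mult norm_power)
    with n B0 show False by (simp add: divide_simps)
  qed
qed

lemma bounded_jordan_solution_exists:
  fixes lam :: complex and r :: "nat \<Rightarrow> 'a \<Rightarrow> complex"
  assumes lam: "cmod lam \<noteq> 1"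
    and \<sigma>: "\<And>P. P \<in> S \<Longrightarrow> \<sigma> P \<in> S" and \<tau>: "\<And>P. P \<in> S \<Longrightarrow> \<tau> P \<in> S"
    and \<tau>_\<sigma>: "\<And>P. P \<in> S \<Longrightarrow> \<tau> (\<sigma> P) = P"
    and r: "\<forall>j\<le>l. bounded_on S (r j)"
  shows "\<exists>U. \<forall>j\<le>l. bounded_on S (U j) \<and>
    (\<forall>P\<in>S. U j (\<sigma> P) = (if j = 0 then 0 else U (j - 1) P) + lam * U j P + r j P)"
  using r
proof (induction l)
  case 0
  then obtain u where "bounded_on S u" "\<forall>P\<in>S. u (\<sigma> P) = lam * u P + r 0 P"
    using bounded_solution_exists[OF lam \<sigma> \<tau> \<tau>_\<sigma>] by blast
  then show ?case by (intro exI[of _ "\<lambda>_. u"]) auto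
next
  case (Suc l)
  then obtain U where U: "\<forall>j\<le>l. bounded_on S (U j) \<and>
      (\<forall>P\<in>S. U j (\<sigma> P) = (if j = 0 then 0 else U (j - 1) P) + lam * U j P + r j P)"
    by auto
  have "bounded_on S (\<lambda>P. U l P - - r (Suc l) P)"
    using U Suc.prems by (intro bounded_on_diff) (auto simp: bounded_on_def)
  then obtain u where u: "bounded_on S u" "\<forall>P\<in>S. u (\<sigma> P) = lam * u P + (U l P + r (Suc l) P)"
    using bounded_solution_exists[OF lam \<sigma> \<tau> \<tau>_\<sigma>] by auto
  show ?case
    using U u by (intro exI[of _ "U(Suc l := u)"]) (auto simp: le_Suc_eq)
qed

lemma bounded_jordan_homogeneous_eq_0:
  fixes lam :: complex and V :: "nat \<Rightarrow> 'a \<Rightarrow> complex"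
  assumes lam: "cmod lam \<noteq> 1"
    and \<sigma>: "\<And>P. P \<in> S \<Longrightarrow> \<sigma> P \<in> S" and \<tau>: "\<And>P. P \<in> S \<Longrightarrow> \<tau> P \<in> S"
    and \<sigma>_\<tau>: "\<And>P. P \<in> S \<Longrightarrow> \<sigma> (\<tau> P) = P"
    and V: "\<forall>j\<le>l. bounded_on S (V j)"
    and eq: "\<forall>j\<le>l. \<forall>P\<in>S. V j (\<sigma> P) = (if j = 0 then 0 else V (j - 1) P) + lam * V j P"
    and "j \<le> l" and "P \<in> S"
  shows "V j P = 0"
  using \<open>j \<le> l\<close> \<open>P \<in> S\<close>
proof (induction j arbitrary: P)
  case 0
  then show ?case
    using V eq by (intro bounded_eigenfunction_eq_0[OF lam \<sigma> \<tau> \<sigma>_\<tau>, of "V 0"]) auto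
next
  case (Suc j)
  then show ?case
    using V eq by (intro bounded_eigenfunction_eq_0[OF lam \<sigma> \<tau> \<sigma>_\<tau>, of "V (Suc j)"]) auto
qed

definition unshift :: "(int \<Rightarrow> 'x) \<Rightarrow> (int \<Rightarrow> 'x)" where
  "unshift P = (\<lambda>m. P (m - 1))"

lemma shift_in_inv_lim: "P \<in> inv_lim f \<Longrightarrow> shift P \<in> inv_lim f"
  by (simp add: inv_lim_def shift_def)

lemma unshift_in_inv_lim: "P \<in> inv_lim f \<Longrightarrow> unshift P \<in> inv_lim f"
  by (simp add: inv_lim_def unshift_def)

lemma unshift_shift [simp]: "unshift (shift P) = P"
  by (simp add: unshift_def shift_def)

lemma shift_unshift [simp]: "shift (unshift P) = P"
  by (simp add: unshift_def shift_def)

lemma pr_0_shift: "P \<in> inv_lim f \<Longrightarrow> pr 0 (shift P) = f (pr 0 P)"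
  by (simp add: inv_lim_def pr_def shift_def)

lemma canonical_heights_exist:
  fixes lam :: complex and h :: "nat \<Rightarrow> 'x \<Rightarrow> complex"
  assumes lam: "cmod lam \<noteq> 1"
    and defect: "\<forall>j\<le>l. bounded_on UNIV
      (\<lambda>x. h j (f x) - (if j = 0 then 0 else h (j - 1) x) - lam * h j x)"
  shows "\<exists>hh. (\<forall>j\<le>l. bounded_on (inv_lim f) (\<lambda>P. hh j P - h j (pr 0 P))) \<and>
    (\<forall>j\<le>l. \<forall>P\<in>inv_lim f. hh j (shift P) = (if j = 0 then 0 else hh (j - 1) P) + lam * hh j P)"
proof -
  define r where "r j P = - (h j (f (pr 0 P)) - (if j = 0 then 0 else h (j - 1) (pr 0 P))
    - lam * h j (pr 0 P))" for j P
  have "\<forall>j\<le>l. bounded_on (inv_lim f) (r j)"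
    using defect unfolding r_def bounded_on_def by (simp only: norm_minus_cancel) blast
  then obtain U where U: "\<forall>j\<le>l. bounded_on (inv_lim f) (U j) \<and> (\<forall>P\<in>inv_lim f.
      U j (shift P) = (if j = 0 then 0 else U (j - 1) P) + lam * U j P + r j P)"
    using bounded_jordan_solution_exists[OF lam shift_in_inv_lim unshift_in_inv_lim unshift_shift]
    by blast
  show ?thesis
    using U by (intro exI[of _ "\<lambda>j P. h j (pr 0 P) + U j P"])
      (auto simp: pr_0_shift r_def algebra_simps)
qed

lemma canonical_heights_unique:
  fixes lam :: complex and h :: "nat \<Rightarrow> 'x \<Rightarrow> complex"
    and hh hh' :: "nat \<Rightarrow> (int \<Rightarrow> 'x) \<Rightarrow> complex"
  assumes lam: "cmod lam \<noteq> 1"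
    and bounded: "\<forall>j\<le>l. bounded_on (inv_lim f) (\<lambda>P. hh j P - h j (pr 0 P))"
      "\<forall>j\<le>l. bounded_on (inv_lim f) (\<lambda>P. hh' j P - h j (pr 0 P))"
    and eq: "\<forall>j\<le>l. \<forall>P\<in>inv_lim f. hh j (shift P) = (if j = 0 then 0 else hh (j - 1) P) + lam * hh j P"
      "\<forall>j\<le>l. \<forall>P\<in>inv_lim f. hh' j (shift P) = (if j = 0 then 0 else hh' (j - 1) P) + lam * hh' j P"
    and j: "j \<le> l" and P: "P \<in> inv_lim f"
  shows "hh' j P = hh j P"
proof -
  have diff_bounded: "\<forall>j\<le>l. bounded_on (inv_lim f) (\<lambda>P. hh' j P - hh j P)"
  proof (intro allI impI)
    fix j assume j: "j \<le> l"
    show "bounded_on (inv_lim f) (\<lambda>P. hh' j P - hh j P)"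
      using bounded_on_diff[OF bounded(2)[rule_format, OF j] bounded(1)[rule_format, OF j]] by simp
  qed
  have diff_eq: "\<forall>j\<le>l. \<forall>P\<in>inv_lim f. hh' j (shift P) - hh j (shift P) =
      (if j = 0 then 0 else hh' (j - 1) P - hh (j - 1) P) + lam * (hh' j P - hh j P)"
    using eq by (auto simp: algebra_simps)
  have "hh' j P - hh j P = 0"
    using lam shift_in_inv_lim unshift_in_inv_lim shift_unshift diff_bounded diff_eq j P
    by (rule bounded_jordan_homogeneous_eq_0[where V = "\<lambda>j P. hh' j P - hh j P"])
  then show ?thesis by simp
qed

theorem theorem1p2:
  fixes f :: "'x \<Rightarrow> 'x"
    and fstar :: "'e \<Rightarrow> 'e \<Rightarrow> int"
    and Prin :: "('e \<Rightarrow> int) set"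
    and hE :: "'e \<Rightarrow> 'x \<Rightarrow> real"
    and lam :: complex
    and l :: nat
    and D :: "nat \<Rightarrow> 'e \<Rightarrow> complex"
    and h :: "nat \<Rightarrow> 'x \<Rightarrow> complex"
  assumes "surj f"
    and "weil_height_machine f fstar Prin hE"
    and "cmod lam \<noteq> 0" and "cmod lam \<noteq> 1"
    and "\<forall>j\<le>l. fin_supp (D j)"
    and "\<forall>j\<le>l. lin_equiv_C Prin (pullbackC fstar (D j))
                 (\<lambda>e. (if j = 0 then 0 else D (j - 1) e) + lam * D j e)"
    and "\<forall>j\<le>l. bounded_on UNIV (\<lambda>x. h j x - div_height hE (D j) x)"
  shows "\<exists>hh :: nat \<Rightarrow> (int \<Rightarrow> 'x) \<Rightarrow> complex.
           ((\<forall>j\<le>l. bounded_on (inv_lim f) (\<lambda>P. hh j P - h j (pr 0 P))) \<and>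
            (\<forall>j\<le>l. \<forall>P\<in>inv_lim f. hh j (shift P) = (if j = 0 then 0 else hh (j - 1) P) + lam * hh j P)) \<and>
           (\<forall>hh' :: nat \<Rightarrow> (int \<Rightarrow> 'x) \<Rightarrow> complex.
              ((\<forall>j\<le>l. bounded_on (inv_lim f) (\<lambda>P. hh' j P - h j (pr 0 P))) \<and>
               (\<forall>j\<le>l. \<forall>P\<in>inv_lim f. hh' j (shift P) = (if j = 0 then 0 else hh' (j - 1) P) + lam * hh' j P))
              \<longrightarrow> (\<forall>j\<le>l. \<forall>P\<in>inv_lim f. hh' j P = hh j P))"
proof -
  have defect: "\<forall>j\<le>l. bounded_on UNIV
      (\<lambda>x. h j (f x) - (if j = 0 then 0 else h (j - 1) x) - lam * h j x)"
  proof (intro allI impI)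
    fix j assume j: "j \<le> l"
    have "bounded_on UNIV (\<lambda>x. (if j = 0 then 0 else h (j - 1) x)
        - div_height hE (\<lambda>e. if j = 0 then 0 else D (j - 1) e) x)"
      using assms(7) j by (cases j) (auto simp: bounded_on_def div_height_def)
    then show "bounded_on UNIV (\<lambda>x. h j (f x) - (if j = 0 then 0 else h (j - 1) x) - lam * h j x)"
      using assms(5-7) j by (intro bounded_height_defect[OF assms(2)]) (auto simp: fin_supp_def)
  qed
  obtain hh where
    "\<forall>j\<le>l. bounded_on (inv_lim f) (\<lambda>P. hh j P - h j (pr 0 P))" and
    "\<forall>j\<le>l. \<forall>P\<in>inv_lim f. hh j (shift P) = (if j = 0 then 0 else hh (j - 1) P) + lam * hh j P"
    using canonical_heights_exist[OF assms(4) defect] by blast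
  then show ?thesis
    using canonical_heights_unique[OF assms(4)] by (intro exI[of _ hh]) blast
qed

end
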